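(* Consider the discrete-time system $$x(t+1)=A\,Z(x(t))+B\,u(t)+w(t),\qquad Z(x)=\begin{bmatrix}x\\ S(x)\end{bmatrix}\in\mathbb{R}^{n+N},$$ with $A=[A_1\ \ A_2]$, $A_1\in\mathbb{R}^{n\times n}$, $A_2\in\mathbb{R}^{n\times N}$, $B\in\mathbb{R}^{n\times m}$, where $S:\mathbb{R}^n\to\mathbb{R}^N$ is differentiable at $0$. Let $A_s=\frac{\partial S}{\partial x}(0)\in\mathbb{R}^{N\times n}$, $Q(x)=S(x)-A_s x$ and $\bar A_1=A_1+A_2A_s$. Suppose input-state data have been collected from this system: inputs $u(0),\dots,u(T-1)$ were applied, producing states $x(0),\dots,x(T)$ under (unmeasured) disturbances $w(0),\dots,w(T-1)$, and form $U_0=[u(0)\ \cdots\ u(T-1)]\in\mathbb{R}^{m\times T}$, $X_0=[x(0)\ \cdots\ x(T-1)]\in\mathbb{R}^{n\times T}$, $X_1=[x(1)\ \cdots\ x(T)]\in\mathbb{R}^{n\times T}$, $W_0=[w(0)\ \cdots\ w(T-1)]\in\mathbb{R}^{n\times T}$, and $V_0=\begin{bmatrix}X_0\\ Q(X_0)\end{bmatrix}\in\mathbb{R}^{(n+N)\times T}$, where $Q(X_0)=[Q(x(0))\ \cdots\ Q(x(T-1))]$. Let $G_K=[G_{K,1}\ \ G_{K,2}]$ with $G_{K,1}\in\mathbb{R}^{T\times n}$, $G_{K,2}\in\mathbb{R}^{T\times N}$ satisfy $V_0G_K=I$, and set $K_1=U_0G_{K,1}$, $K_2=U_0G_{K,2}$.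 Then under the controller $u(t)=K_1x(t)+K_2Q(x(t))$ the closed-loop system satisfies $$x(t+1)=(X_1-W_0)G_{K,1}\,x(t)+(X_1-W_0)G_{K,2}\,Q(x(t))+w(t).$$ Moreover, if $V_0$ has full row rank and $T\ge n+N+1$, then a matrix $G_K$ with $V_0G_K=I$ exists and is not unique.
   Context: All inequalities and dimensions are as stated; $I$ denotes the identity matrix of appropriate dimension. The matrices $A$, $B$ are unknown; $S$ (hence $Z$ and $Q$) is known. $w(t)$ in the closed-loop equation denotes the disturbance acting at time $t$ during closed-loop operation, while $W_0$ is the disturbance sequence that acted during data collection. *)

theory Defs
  imports "HOL-Analysis.Analysis"
begin

definition vstack :: "real^'n::finite \<Rightarrow> real^'k::finite \<Rightarrow> real^('n + 'k)" where
  "vstack a b = (\<chi> r. case r of Inl i \<Rightarrow> a $ i | Inr j \<Rightarrow> b $ j)"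

definition mstack :: "real^'c^'r1::finite \<Rightarrow> real^'c^'r2::finite \<Rightarrow> real^'c^('r1 + 'r2)" where
  "mstack M P = (\<chi> r. case r of Inl i \<Rightarrow> M $ i | Inr j \<Rightarrow> P $ j)"

definition lcols :: "real^('c1::finite + 'c2::finite)^'r \<Rightarrow> real^'c1^'r" where
  "lcols M = (\<chi> i j. M $ i $ Inl j)"

definition rcols :: "real^('c1::finite + 'c2::finite)^'r \<Rightarrow> real^'c2^'r" where
  "rcols M = (\<chi> i j. M $ i $ Inr j)"

end

theory Submission imports Defs begin

text \<open>Since \<open>S x = As x + Q x\<close>, the lifted state is \<open>Z x = M [x; Q x]\<close> for the block matrix
  \<open>M = [I 0; As I]\<close>, so the data obey \<open>X1 - W0 = A M V0 + B U0\<close>. For any right inverse \<open>GK\<close> of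
  \<open>V0\<close> this gives \<open>(X1 - W0) GK = A M + B [K1 K2]\<close>, which is exactly the matrix of the closed loop
  acting on \<open>[x; Q x]\<close>. A full row rank \<open>V0\<close> has a right inverse; if moreover \<open>T > n + N\<close>,
  it has a nonzero kernel vector \<open>z\<close>, and adding \<open>z\<close> to every column of \<open>GK\<close> gives another one.\<close>

lemma sum_UNIV_Plus:
  "(\<Sum>r\<in>(UNIV :: ('a::finite + 'b::finite) set). f r) = (\<Sum>i\<in>UNIV. f (Inl i)) + (\<Sum>j\<in>UNIV. f (Inr j))"
  by (subst UNIV_Plus_UNIV [symmetric], subst sum.Plus) auto

lemma matrix_vector_mult_vstack: "G *v vstack a b = lcols G *v a + rcols G *v b"
  by (simp add: vec_eq_iff matrix_vector_mult_def lcols_def rcols_def vstack_def sum_UNIV_Plus)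

lemma matrix_mult_lcols_rcols:
  "(P ** lcols G) *v a + (P ** rcols G) *v b = P *v (G *v vstack a b)"
  by (simp add: matrix_vector_mult_vstack matrix_vector_right_distrib matrix_vector_mul_assoc)

definition shear_block :: "real^'n^'q \<Rightarrow> real^('n::finite + 'q::finite)^('n + 'q)" where
  "shear_block As = (\<chi> r c. case (r, c) of
      (Inl i, Inl k) \<Rightarrow> of_bool (i = k)
    | (Inl i, Inr l) \<Rightarrow> 0
    | (Inr j, Inl k) \<Rightarrow> As $ j $ k
    | (Inr j, Inr l) \<Rightarrow> of_bool (j = l))"

lemma shear_block_mult_vstack: "shear_block As *v vstack y z = vstack y (As *v y + z)"
  by (simp add: vec_eq_iff matrix_vector_mult_def shear_block_def vstack_def sum_UNIV_Plus
      split: sum.split)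

definition data_matrix :: "('T::finite \<Rightarrow> nat) \<Rightarrow> (nat \<Rightarrow> real^'k) \<Rightarrow> real^'T^'k" where
  "data_matrix idx f = (\<chi> i j. f (idx j) $ i)"

lemma data_matrix_cong: "(\<And>j. f (idx j) = g (idx j)) \<Longrightarrow> data_matrix idx f = data_matrix idx g"
  by (simp add: data_matrix_def)

lemma matrix_mult_data_matrix: "P ** data_matrix idx f = data_matrix idx (\<lambda>t. P *v f t)"
  by (simp add: vec_eq_iff matrix_matrix_mult_def matrix_vector_mult_def data_matrix_def)

lemma data_matrix_add: "data_matrix idx f + data_matrix idx g = data_matrix idx (\<lambda>t. f t + g t)"
  by (simp add: vec_eq_iff data_matrix_def)

lemma data_matrix_diff: "data_matrix idx f - data_matrix idx g = data_matrix idx (\<lambda>t. f t - g t)"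
  by (simp add: vec_eq_iff data_matrix_def)

lemma mstack_data_matrix:
  "mstack (data_matrix idx f) (data_matrix idx g) = data_matrix idx (\<lambda>t. vstack (f t) (g t))"
  by (simp add: vec_eq_iff mstack_def data_matrix_def vstack_def split: sum.split)

lemma closed_loop_from_data:
  fixes V :: "real^'T^('n::finite + 'q::finite)" and G :: "real^('n + 'q)^'T"
  assumes data: "D = A ** M ** V + B ** U" and right_inverse: "V ** G = mat 1"
  shows "(D ** lcols G) *v a + (D ** rcols G) *v b
    = A *v (M *v vstack a b) + B *v ((U ** lcols G) *v a + (U ** rcols G) *v b)"
proof -
  have "D *v y = A *v (M *v (V *v y)) + B *v (U *v y)" for y
    by (simp add: data matrix_vector_mult_add_rdistrib matrix_vector_mul_assoc matrix_mul_assoc)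
  moreover have "V *v (G *v v) = v" for v
    by (simp add: right_inverse matrix_vector_mul_assoc)
  ultimately show ?thesis
    by (simp add: matrix_mult_lcols_rcols)
qed

lemma right_inverse_exists_not_unique:
  fixes V :: "real^'c^'r"
  assumes full_row_rank: "rank V = CARD('r)" and wide: "CARD('r) < CARD('c)"
  shows "(\<exists>G. V ** G = mat 1) \<and> \<not> (\<exists>!G. V ** G = mat 1)"
proof -
  obtain G where G: "V ** G = mat 1"
    using full_row_rank full_rank_surjective matrix_right_invertible_surjective by blast
  obtain z where z: "z \<noteq> 0" "V *v z = 0"
    using full_row_rank wide matrix_nonfull_linear_equations_eq by force
  define Z :: "real^'r^'c" where "Z = (\<chi> i j. z $ i)"
  have "V ** Z = 0"
    using z(2) by (simp add: Z_def vec_eq_iff matrix_matrix_mult_def matrix_vector_mult_def)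
  then have "V ** (G + Z) = mat 1"
    by (simp add: G matrix_add_ldistrib)
  moreover have "Z \<noteq> 0"
    using z(1) by (simp add: Z_def vec_eq_iff)
  ultimately show ?thesis
    using G by (metis add_cancel_left_right)
qed

theorem lemma1:
  fixes A :: "real^('n::finite + 'q::finite)^'n"
    and B :: "real^'m::finite^'n"
    and S :: "real^'n \<Rightarrow> real^'q"
    and As :: "real^'n^'q"
    and Q :: "real^'n \<Rightarrow> real^'q"
    and x :: "nat \<Rightarrow> real^'n" and u :: "nat \<Rightarrow> real^'m" and w :: "nat \<Rightarrow> real^'n"
    and idx :: "'T::finite \<Rightarrow> nat"
    and U0 :: "real^'T^'m" and X0 X1 W0 :: "real^'T^'n" and V0 :: "real^'T^('n + 'q)"
  assumes S_deriv: "(S has_derivative (\<lambda>h. As *v h)) (at 0)"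
    and Q_def: "\<And>y. Q y = S y - As *v y"
    and idx: "bij_betw idx UNIV {..<CARD('T)}"
    and data: "\<And>t. t < CARD('T) \<Longrightarrow> x (Suc t) = A *v vstack (x t) (S (x t)) + B *v u t + w t"
    and U0_def: "U0 = (\<chi> i j. u (idx j) $ i)"
    and X0_def: "X0 = (\<chi> i j. x (idx j) $ i)"
    and X1_def: "X1 = (\<chi> i j. x (Suc (idx j)) $ i)"
    and W0_def: "W0 = (\<chi> i j. w (idx j) $ i)"
    and V0_def: "V0 = mstack X0 (\<chi> i j. Q (x (idx j)) $ i)"
  shows
    "(\<forall>GK :: real^('n + 'q)^'T. V0 ** GK = mat 1 \<longrightarrow>
       (let K1 = U0 ** lcols GK; K2 = U0 ** rcols GK in
        \<forall>(xc :: nat \<Rightarrow> real^'n) (wc :: nat \<Rightarrow> real^'n).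
          (\<forall>t. xc (Suc t) = A *v vstack (xc t) (S (xc t))
                  + B *v (K1 *v xc t + K2 *v Q (xc t)) + wc t) \<longrightarrow>
          (\<forall>t. xc (Suc t) = ((X1 - W0) ** lcols GK) *v xc t
                  + ((X1 - W0) ** rcols GK) *v Q (xc t) + wc t)))
   \<and> (rank V0 = CARD('n + 'q) \<and> CARD('T) \<ge> CARD('n) + CARD('q) + 1 \<longrightarrow>
       (\<exists>GK :: real^('n + 'q)^'T. V0 ** GK = mat 1)
       \<and> \<not> (\<exists>!GK :: real^('n + 'q)^'T. V0 ** GK = mat 1))"
proof -
  have lift: "shear_block As *v vstack y (Q y) = vstack y (S y)" for y
    by (simp add: shear_block_mult_vstack Q_def)
  have idx_less: "idx j < CARD('T)" for j
    using idx by (auto simp: bij_betw_def)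
  have V0_data: "V0 = data_matrix idx (\<lambda>t. vstack (x t) (Q (x t)))"
    by (simp add: V0_def X0_def mstack_data_matrix [symmetric] data_matrix_def)
  have "X1 - W0 = data_matrix idx (\<lambda>t. x (Suc t) - w t)"
    by (simp add: X1_def W0_def data_matrix_diff [symmetric] data_matrix_def)
  also have "\<dots> = data_matrix idx (\<lambda>t. A *v (shear_block As *v vstack (x t) (Q (x t))) + B *v u t)"
    by (rule data_matrix_cong) (simp add: data [OF idx_less] lift)
  also have "\<dots> = A ** shear_block As ** V0 + B ** U0"
    by (simp add: V0_data U0_def matrix_mult_data_matrix data_matrix_add matrix_vector_mul_assoc
        data_matrix_def [symmetric])
  finally have data_eq: "X1 - W0 = A ** shear_block As ** V0 + B ** U0" .
  have "(X1 - W0) ** lcols GK *v y + (X1 - W0) ** rcols GK *v Q y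
      = A *v vstack y (S y) + B *v (U0 ** lcols GK *v y + U0 ** rcols GK *v Q y)"
    if "V0 ** GK = mat 1" for GK y
    using closed_loop_from_data [OF data_eq that] by (simp add: lift)
  moreover have "CARD('n + 'q) < CARD('T)" if "CARD('T) \<ge> CARD('n) + CARD('q) + 1"
    using that by simp
  ultimately show ?thesis
    using right_inverse_exists_not_unique [of V0] by (simp add: Let_def)
qed

end
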